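(* Let $d\ge1$, let $x_0\neq x_1\in\mathbb{R}^d$ have the same Euclidean norm, let $n_0,\dots,n_{M-1}$ be i.i.d. $\mathcal{N}(0,I_{d\times d})$, and let $\hat{x}_0,\hat{x}_1$ be the output of the soft-assignment algorithm with templates $x_0,x_1$. Then, almost surely as $M\to\infty$, $\hat{x}_0\to 2\,\mathbb{E}\left[\frac{n}{1+\exp(\langle n,x_1-x_0\rangle)}\right]$ and $\hat{x}_1\to-2\,\mathbb{E}\left[\frac{n}{1+\exp(\langle n,x_1-x_0\rangle)}\right]$, where $n\sim\mathcal{N}(0,I_{d\times d})$.
   Context: Soft-assignment algorithm: $p_i^{(\ell)}=\frac{\exp(\langle n_i,x_\ell\rangle)}{\exp(\langle n_i,x_0\rangle)+\exp(\langle n_i,x_1\rangle)}$ for $\ell\in\{0,1\}$, and $\hat{x}_\ell=\frac{\sum_{i=0}^{M-1}p_i^{(\ell)}n_i}{\sum_{i=0}^{M-1}p_i^{(\ell)}}$. *)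

theory Defs
  imports "HOL-Probability.Probability"
begin

definition std_gauss_density :: "real ^ 'd \<Rightarrow> real" where
  "std_gauss_density x = (2 * pi) powr (- real CARD('d) / 2) * exp (- (norm x)\<^sup>2 / 2)"

definition std_gauss_vec :: "(real ^ 'd) measure" where
  "std_gauss_vec = density lborel (\<lambda>x. ennreal (std_gauss_density x))"

text \<open>Soft-assignment weight p^(l) of a sample n for template xl (xl is x0 or x1).\<close>
definition soft_weight :: "real ^ 'd \<Rightarrow> real ^ 'd \<Rightarrow> real ^ 'd \<Rightarrow> real ^ 'd \<Rightarrow> real" where
  "soft_weight x0 x1 xl n = exp (n \<bullet> xl) / (exp (n \<bullet> x0) + exp (n \<bullet> x1))"

definition soft_est :: "real ^ 'd \<Rightarrow> real ^ 'd \<Rightarrow> real ^ 'd \<Rightarrow> (nat \<Rightarrow> real ^ 'd) \<Rightarrow> nat \<Rightarrow> real ^ 'd" where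
  "soft_est x0 x1 xl ns m =
     (\<Sum>i<m. soft_weight x0 x1 xl (ns i) *\<^sub>R ns i) /\<^sub>R (\<Sum>i<m. soft_weight x0 x1 xl (ns i))"

end

theory Submission
  imports Defs "HOL-Library.Discrete_Functions"
begin

(*
  The weight of template x0 is the logistic function p(n) = 1 / (1 + exp <n, x1 - x0>), and the
  weight of x1 is p(-n) = 1 - p(n). Dividing numerator and denominator of each estimate by M,
  both converge almost surely by the strong law of large numbers. Since N(0, I) is symmetric,
  E p(n) = 1/2 and E [p(-n) n] = - E [p(n) n], which gives the limits +-2 E [p(n) n].

  The strong law is proved for nonnegative, square-integrable, pairwise uncorrelated summands
  with common first and second moments: the average of the first k^2 summands has variance
  O(1/k^2), which is summable, so Chebyshev's inequality and Borel-Cantelli give convergence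
  along the squares, and monotonicity of the partial sums fills the gaps. General
  summands are split into positive and negative parts, vectors into coordinates.
*)

lemma filterlim_floor_sqrt_at_top: "filterlim floor_sqrt at_top sequentially"
  unfolding filterlim_at_top
  by (metis eventually_sequentiallyI le_floor_sqrtI)

lemma mono_div_floor_sqrt_bounds:
  fixes a :: "nat \<Rightarrow> real"
  assumes mono: "mono a" and nonneg: "\<And>m. 0 \<le> a m" and "1 \<le> m"
  shows "a (floor_sqrt m ^ 2) / real (Suc (floor_sqrt m) ^ 2) \<le> a m / real m"
    and "a m / real m \<le> a (Suc (floor_sqrt m) ^ 2) / real (floor_sqrt m ^ 2)"
proof -
  let ?s = "floor_sqrt m"
  have below: "?s\<^sup>2 \<le> m" and above: "m \<le> Suc ?s ^ 2" and "0 < ?s"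
    using \<open>1 \<le> m\<close> Suc_floor_sqrt_power2_gt[of m] by auto
  then have "real (?s\<^sup>2) \<le> real m" "real m \<le> real (Suc ?s ^ 2)" "0 < real (?s\<^sup>2)" "0 < real m"
    using \<open>1 \<le> m\<close> by (simp_all only: of_nat_le_iff of_nat_0_less_iff zero_less_power)
  then show "a (?s ^ 2) / real (Suc ?s ^ 2) \<le> a m / real m"
    and "a m / real m \<le> a (Suc ?s ^ 2) / real (?s ^ 2)"
    by (auto intro!: frac_le monoD[OF mono below] monoD[OF mono above] nonneg)
qed

lemma LIMSEQ_div_of_LIMSEQ_squares:
  fixes a :: "nat \<Rightarrow> real"
  assumes mono: "mono a" and nonneg: "\<And>m. 0 \<le> a m"
    and squares: "(\<lambda>k. a (k\<^sup>2) / real (k\<^sup>2)) \<longlonglongrightarrow> \<mu>"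
  shows "(\<lambda>m. a m / real m) \<longlonglongrightarrow> \<mu>"
proof -
  have ratio: "(\<lambda>k. (real k / real (Suc k))\<^sup>2) \<longlonglongrightarrow> 1"
    using tendsto_power[OF LIMSEQ_n_over_Suc_n, of 2] by simp
  have ratio': "(\<lambda>k. (real (Suc k) / real k)\<^sup>2) \<longlonglongrightarrow> 1"
    using tendsto_power[OF LIMSEQ_Suc_n_over_n, of 2] by simp
  have "(\<lambda>k. a (k\<^sup>2) / real (k\<^sup>2) * (real k / real (Suc k))\<^sup>2) \<longlonglongrightarrow> \<mu>"
    using tendsto_mult[OF squares ratio] by simp
  then have lower: "(\<lambda>k. a (k\<^sup>2) / real (Suc k ^ 2)) \<longlonglongrightarrow> \<mu>"
    by (rule Lim_transform_eventually, intro eventually_sequentiallyI[of 1])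
      (simp add: field_simps power2_eq_square)
  have "(\<lambda>k. a (Suc k ^ 2) / real (Suc k ^ 2) * (real (Suc k) / real k)\<^sup>2) \<longlonglongrightarrow> \<mu>"
    using tendsto_mult[OF LIMSEQ_Suc[OF squares] ratio'] by simp
  then have upper: "(\<lambda>k. a (Suc k ^ 2) / real (k\<^sup>2)) \<longlonglongrightarrow> \<mu>"
    by (rule Lim_transform_eventually, intro eventually_sequentiallyI[of 1])
      (simp add: power_divide del: of_nat_Suc)
  show ?thesis
  proof (rule tendsto_sandwich)
    show "(\<lambda>m. a (floor_sqrt m ^ 2) / real (Suc (floor_sqrt m) ^ 2)) \<longlonglongrightarrow> \<mu>"
      using filterlim_compose[OF lower filterlim_floor_sqrt_at_top] .
    show "(\<lambda>m. a (Suc (floor_sqrt m) ^ 2) / real (floor_sqrt m ^ 2)) \<longlonglongrightarrow> \<mu>"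
      using filterlim_compose[OF upper filterlim_floor_sqrt_at_top] .
  qed (intro eventually_sequentiallyI[of 1] mono_div_floor_sqrt_bounds[OF mono nonneg], assumption)+
qed

lemma LIMSEQ_scaleR_ratio:
  fixes A :: "nat \<Rightarrow> 'a::real_normed_vector" and B :: "nat \<Rightarrow> real"
  assumes "(\<lambda>m. A m /\<^sub>R real m) \<longlonglongrightarrow> a" and "(\<lambda>m. B m / real m) \<longlonglongrightarrow> b" and "b \<noteq> 0"
  shows "(\<lambda>m. A m /\<^sub>R B m) \<longlonglongrightarrow> a /\<^sub>R b"
proof -
  have "(\<lambda>m. inverse (B m / real m) *\<^sub>R (A m /\<^sub>R real m)) \<longlonglongrightarrow> inverse b *\<^sub>R a"
    by (intro tendsto_scaleR tendsto_inverse assms)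
  then show ?thesis
    by (rule Lim_transform_eventually, intro eventually_sequentiallyI[of 1])
      (simp add: inverse_eq_divide)
qed

lemma integrable_mult_of_square_integrable:
  fixes f g :: "'a \<Rightarrow> real"
  assumes [measurable]: "f \<in> borel_measurable M" "g \<in> borel_measurable M"
    and "integrable M (\<lambda>x. (f x)\<^sup>2)" "integrable M (\<lambda>x. (g x)\<^sup>2)"
  shows "integrable M (\<lambda>x. f x * g x)"
proof (rule Bochner_Integration.integrable_bound)
  show "integrable M (\<lambda>x. (f x)\<^sup>2 + (g x)\<^sup>2)"
    using assms by simp
  have "\<bar>a * b\<bar> \<le> a\<^sup>2 + b\<^sup>2" for a b :: real
  proof -
    have "\<bar>a * b\<bar> \<le> 2 * \<bar>a\<bar> * \<bar>b\<bar>"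
      by (simp add: abs_mult)
    also have "\<dots> \<le> a\<^sup>2 + b\<^sup>2"
      using sum_squares_bound[of "\<bar>a\<bar>" "\<bar>b\<bar>"] by simp
    finally show ?thesis .
  qed
  then show "AE x in M. norm (f x * g x) \<le> norm ((f x)\<^sup>2 + (g x)\<^sup>2)"
    by simp
qed measurable

lemma AE_LIMSEQ_of_AE_eventually_dist_less:
  fixes X :: "nat \<Rightarrow> 'a \<Rightarrow> 'b::metric_space"
  assumes "\<And>\<epsilon>. 0 < \<epsilon> \<Longrightarrow> AE \<omega> in M. eventually (\<lambda>k. dist (X k \<omega>) l < \<epsilon>) sequentially"
  shows "AE \<omega> in M. (\<lambda>k. X k \<omega>) \<longlonglongrightarrow> l"
proof -
  have "AE \<omega> in M. \<forall>r::nat. eventually (\<lambda>k. dist (X k \<omega>) l < inverse (Suc r)) sequentially"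
    using assms by (subst AE_all_countable) simp
  then show ?thesis
  proof (rule eventually_mono)
    fix \<omega> assume close: "\<forall>r::nat. eventually (\<lambda>k. dist (X k \<omega>) l < inverse (Suc r)) sequentially"
    show "(\<lambda>k. X k \<omega>) \<longlonglongrightarrow> l"
    proof (rule tendstoI)
      fix e :: real assume "0 < e"
      then obtain r where "inverse (real (Suc r)) < e"
        using reals_Archimedean by blast
      then show "eventually (\<lambda>k. dist (X k \<omega>) l < e) sequentially"
        using close[rule_format, of r] by (auto elim: eventually_mono)
    qed
  qed
qed

lemma (in prob_space) variance_divide: "variance (\<lambda>\<omega>. X \<omega> / c) = variance X / c\<^sup>2"
  for X :: "'a \<Rightarrow> real"
  by (simp add: power_divide flip: diff_divide_distrib)

lemma (in prob_space) AE_LIMSEQ_of_summable_variance: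
  fixes T :: "nat \<Rightarrow> 'a \<Rightarrow> real"
  assumes [measurable]: "\<And>k. T k \<in> borel_measurable M"
    and square_integrable: "\<And>k. integrable M (\<lambda>\<omega>. (T k \<omega>)\<^sup>2)"
    and mean: "\<And>k. expectation (T k) = \<mu>"
    and summable: "summable (\<lambda>k. variance (T k))"
  shows "AE \<omega> in M. (\<lambda>k. T k \<omega>) \<longlonglongrightarrow> \<mu>"
proof (rule AE_LIMSEQ_of_AE_eventually_dist_less)
  fix \<epsilon> :: real assume "0 < \<epsilon>"
  define A where "A k = {\<omega> \<in> space M. \<epsilon> \<le> \<bar>T k \<omega> - \<mu>\<bar>}" for k
  have [measurable]: "A k \<in> events" for k
    unfolding A_def by measurable
  have "prob (A k) \<le> variance (T k) / \<epsilon>\<^sup>2" for k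
    using Chebyshev_inequality[OF _ square_integrable \<open>0 < \<epsilon>\<close>] unfolding A_def mean by simp
  then have "summable (\<lambda>k. prob (A k))"
    by (intro summable_comparison_test[OF _ summable_divide[OF summable]]) auto
  then have "AE \<omega> in M. eventually (\<lambda>k. \<omega> \<in> space M - A k) sequentially"
    by (intro borel_cantelli_AE1) (auto simp flip: less_top)
  then show "AE \<omega> in M. eventually (\<lambda>k. dist (T k \<omega>) \<mu> < \<epsilon>) sequentially"
    by eventually_elim (auto elim!: eventually_mono simp: A_def dist_real_def)
qed

lemma (in prob_space) variance_sum_uncorrelated:
  fixes Y :: "nat \<Rightarrow> 'a \<Rightarrow> real"
  assumes [measurable]: "\<And>i. Y i \<in> borel_measurable M"
    and square_integrable: "\<And>i. integrable M (\<lambda>\<omega>. (Y i \<omega>)\<^sup>2)"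
    and mean: "\<And>i. expectation (Y i) = \<mu>"
    and second_moment: "\<And>i. expectation (\<lambda>\<omega>. (Y i \<omega>)\<^sup>2) = s"
    and uncorrelated: "\<And>i j. i \<noteq> j \<Longrightarrow> expectation (\<lambda>\<omega>. Y i \<omega> * Y j \<omega>) = \<mu> * \<mu>"
  shows "variance (\<lambda>\<omega>. \<Sum>i<m. Y i \<omega>) = real m * (s - \<mu>\<^sup>2)"
proof -
  have integrable: "integrable M (Y i)" for i
    using square_integrable_imp_integrable[OF _ square_integrable] by simp
  have integrable_mult: "integrable M (\<lambda>\<omega>. Y i \<omega> * Y j \<omega>)" for i j
    by (rule integrable_mult_of_square_integrable) (auto intro: square_integrable)
  have square_sum: "(\<Sum>i<m. Y i \<omega>)\<^sup>2 = (\<Sum>i<m. \<Sum>j<m. Y i \<omega> * Y j \<omega>)" for \<omega>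
    by (simp add: power2_eq_square sum_product)
  have "expectation (\<lambda>\<omega>. (\<Sum>i<m. Y i \<omega>)\<^sup>2) = (\<Sum>i<m. \<Sum>j<m. expectation (\<lambda>\<omega>. Y i \<omega> * Y j \<omega>))"
    unfolding square_sum using integrable_mult by simp
  also have "\<dots> = (\<Sum>i<m. s + (real m - 1) * \<mu>\<^sup>2)"
  proof (rule sum.cong)
    fix i assume "i \<in> {..<m}"
    then have "(\<Sum>j<m. expectation (\<lambda>\<omega>. Y i \<omega> * Y j \<omega>))
        = expectation (\<lambda>\<omega>. Y i \<omega> * Y i \<omega>) + (\<Sum>j\<in>{..<m} - {i}. expectation (\<lambda>\<omega>. Y i \<omega> * Y j \<omega>))"
      by (simp add: sum.remove)
    also have "\<dots> = s + (\<Sum>j\<in>{..<m} - {i}. \<mu> * \<mu>)"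
      using second_moment[of i] uncorrelated[of i] by (simp add: power2_eq_square)
    also have "\<dots> = s + (real m - 1) * \<mu>\<^sup>2"
      using \<open>i \<in> {..<m}\<close> by (simp add: power2_eq_square)
    finally show "(\<Sum>j<m. expectation (\<lambda>\<omega>. Y i \<omega> * Y j \<omega>)) = s + (real m - 1) * \<mu>\<^sup>2" .
  qed simp
  finally show ?thesis
    using integrable integrable_mult square_sum
    by (subst variance_eq) (simp_all add: mean power2_eq_square algebra_simps)
qed

theorem (in prob_space) strong_law_nonneg_uncorrelated:
  fixes Y :: "nat \<Rightarrow> 'a \<Rightarrow> real"
  assumes [measurable]: "\<And>i. Y i \<in> borel_measurable M"
    and nonneg: "\<And>i \<omega>. 0 \<le> Y i \<omega>"
    and square_integrable: "\<And>i. integrable M (\<lambda>\<omega>. (Y i \<omega>)\<^sup>2)"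
    and mean: "\<And>i. expectation (Y i) = \<mu>"
    and second_moment: "\<And>i. expectation (\<lambda>\<omega>. (Y i \<omega>)\<^sup>2) = s"
    and uncorrelated: "\<And>i j. i \<noteq> j \<Longrightarrow> expectation (\<lambda>\<omega>. Y i \<omega> * Y j \<omega>) = \<mu> * \<mu>"
  shows "AE \<omega> in M. (\<lambda>m. (\<Sum>i<m. Y i \<omega>) / real m) \<longlonglongrightarrow> \<mu>"
proof -
  define T where "T k \<omega> = (\<Sum>i<Suc k ^ 2. Y i \<omega>) / real (Suc k ^ 2)" for k \<omega>
  have integrable: "integrable M (Y i)" for i
    using square_integrable_imp_integrable[OF _ square_integrable] by simp
  have "integrable M (\<lambda>\<omega>. (\<Sum>i<m. Y i \<omega>)\<^sup>2)" for m
    unfolding power2_eq_square sum_product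
    by (intro Bochner_Integration.integrable_sum integrable_mult_of_square_integrable square_integrable)
      simp_all
  then have T_square_integrable: "integrable M (\<lambda>\<omega>. (T k \<omega>)\<^sup>2)" for k
    unfolding T_def power_divide by (rule integrable_divide)
  have T_mean: "expectation (T k) = \<mu>" for k
    using integrable by (simp add: T_def[abs_def] mean)
  have T_variance_summable: "summable (\<lambda>k. variance (T k))"
  proof -
    have "variance (T k) = (s - \<mu>\<^sup>2) * inverse (real (Suc k) ^ 2)" for k
      unfolding T_def variance_divide
      by (subst variance_sum_uncorrelated[OF _ square_integrable mean second_moment uncorrelated])
        (simp_all add: field_simps)
    moreover have "summable (\<lambda>k. inverse (real (Suc k) ^ 2))"
      using inverse_power_summable[of 2, where 'a=real] by (subst summable_Suc_iff) simp
    ultimately show ?thesis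
      by (simp add: summable_mult)
  qed
  have "AE \<omega> in M. (\<lambda>k. T k \<omega>) \<longlonglongrightarrow> \<mu>"
    by (rule AE_LIMSEQ_of_summable_variance[OF _ T_square_integrable T_mean T_variance_summable])
      (simp add: T_def)
  then show ?thesis
  proof (rule eventually_mono)
    fix \<omega> assume "(\<lambda>k. T k \<omega>) \<longlonglongrightarrow> \<mu>"
    then have "(\<lambda>k. (\<Sum>i<k\<^sup>2. Y i \<omega>) / real (k\<^sup>2)) \<longlonglongrightarrow> \<mu>"
      unfolding T_def by (rule LIMSEQ_imp_Suc)
    then show "(\<lambda>m. (\<Sum>i<m. Y i \<omega>) / real m) \<longlonglongrightarrow> \<mu>"
      by (rule LIMSEQ_div_of_LIMSEQ_squares[rotated 2])
        (auto intro!: monoI sum_mono2 sum_nonneg nonneg)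
  qed
qed

lemma (in prob_space) strong_law_nonneg_iid:
  fixes X :: "nat \<Rightarrow> 'a \<Rightarrow> 'b" and g :: "'b \<Rightarrow> real"
  assumes indep: "indep_vars (\<lambda>_. S) X UNIV"
    and distr_X: "\<And>i. distr M S (X i) = D"
    and [measurable]: "g \<in> borel_measurable S"
    and nonneg: "\<And>x. 0 \<le> g x"
    and square_integrable: "integrable D (\<lambda>x. (g x)\<^sup>2)"
  shows "AE \<omega> in M. (\<lambda>m. (\<Sum>i<m. g (X i \<omega>)) / real m) \<longlonglongrightarrow> integral\<^sup>L D g"
proof -
  have [measurable]: "X i \<in> measurable M S" for i
    using indep unfolding indep_vars_def2 by simp
  have integral_X: "expectation (\<lambda>\<omega>. h (X i \<omega>)) = integral\<^sup>L D h"
    if [measurable]: "h \<in> borel_measurable S" for h :: "'b \<Rightarrow> real" and i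
    using integral_distr[of "X i" M S h] distr_X by simp
  have integrable_X: "integrable M (\<lambda>\<omega>. h (X i \<omega>)) \<longleftrightarrow> integrable D h"
    if [measurable]: "h \<in> borel_measurable S" for h :: "'b \<Rightarrow> real" and i
    using integrable_distr_eq[of "X i" M S h] distr_X by simp
  have square_integrable_X: "integrable M (\<lambda>\<omega>. (g (X i \<omega>))\<^sup>2)" for i
    using integrable_X[of "\<lambda>x. (g x)\<^sup>2"] square_integrable by simp
  have integrable_X_g: "integrable M (\<lambda>\<omega>. g (X i \<omega>))" for i
    by (rule square_integrable_imp_integrable[OF _ square_integrable_X]) simp
  have uncorrelated: "expectation (\<lambda>\<omega>. g (X i \<omega>) * g (X j \<omega>)) = integral\<^sup>L D g * integral\<^sup>L D g"
    if "i \<noteq> j" for i j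
  proof -
    have "indep_vars (\<lambda>_. borel) (\<lambda>k \<omega>. g (X k \<omega>)) {i, j}"
      by (rule indep_vars_subset[OF indep_vars_compose2[OF indep]]) simp_all
    then have "expectation (\<lambda>\<omega>. \<Prod>k\<in>{i, j}. g (X k \<omega>)) = (\<Prod>k\<in>{i, j}. expectation (\<lambda>\<omega>. g (X k \<omega>)))"
      by (intro indep_vars_lebesgue_integral integrable_X_g) simp_all
    then show ?thesis
      using \<open>i \<noteq> j\<close> by (simp add: integral_X)
  qed
  show ?thesis
    by (rule strong_law_nonneg_uncorrelated[OF _ nonneg square_integrable_X integral_X integral_X uncorrelated])
      simp_all
qed

theorem (in prob_space) strong_law_iid:
  fixes X :: "nat \<Rightarrow> 'a \<Rightarrow> 'b" and g :: "'b \<Rightarrow> real"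
  assumes indep: "indep_vars (\<lambda>_. S) X UNIV"
    and distr_X: "\<And>i. distr M S (X i) = D"
    and [measurable]: "g \<in> borel_measurable S"
    and square_integrable: "integrable D (\<lambda>x. (g x)\<^sup>2)"
  shows "AE \<omega> in M. (\<lambda>m. (\<Sum>i<m. g (X i \<omega>)) / real m) \<longlonglongrightarrow> integral\<^sup>L D g"
proof -
  have sets_D [measurable_cong]: "sets D = sets S"
    using distr_X[of 0] by auto
  interpret D: prob_space D
    using prob_space_distr[of "X 0" S] indep distr_X unfolding indep_vars_def2 by simp
  define g_pos where "g_pos x = max (g x) 0" for x
  define g_neg where "g_neg x = max (- g x) 0" for x
  have [measurable]: "g_pos \<in> borel_measurable S" "g_neg \<in> borel_measurable S"
    unfolding g_pos_def g_neg_def by measurable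
  have "(g_pos x)\<^sup>2 \<le> (g x)\<^sup>2" "(g_neg x)\<^sup>2 \<le> (g x)\<^sup>2" for x
    unfolding g_pos_def g_neg_def by (simp_all add: max_def)
  then have square_integrable_parts: "integrable D (\<lambda>x. (g_pos x)\<^sup>2)" "integrable D (\<lambda>x. (g_neg x)\<^sup>2)"
    by (auto intro!: Bochner_Integration.integrable_bound[OF square_integrable])
  then have "integrable D g_pos" "integrable D g_neg"
    by (simp_all add: D.square_integrable_imp_integrable)
  have pos: "AE \<omega> in M. (\<lambda>m. (\<Sum>i<m. g_pos (X i \<omega>)) / real m) \<longlonglongrightarrow> integral\<^sup>L D g_pos"
    by (rule strong_law_nonneg_iid[OF indep distr_X _ _ square_integrable_parts(1)]) (simp_all add: g_pos_def)
  have neg: "AE \<omega> in M. (\<lambda>m. (\<Sum>i<m. g_neg (X i \<omega>)) / real m) \<longlonglongrightarrow> integral\<^sup>L D g_neg"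
    by (rule strong_law_nonneg_iid[OF indep distr_X _ _ square_integrable_parts(2)]) (simp_all add: g_neg_def)
  have g_split: "g = (\<lambda>x. g_pos x - g_neg x)"
    unfolding g_pos_def g_neg_def by auto
  with \<open>integrable D g_pos\<close> \<open>integrable D g_neg\<close> have "integral\<^sup>L D g = integral\<^sup>L D g_pos - integral\<^sup>L D g_neg"
    by simp
  moreover have "(\<Sum>i<m. g (X i \<omega>)) / real m
      = (\<Sum>i<m. g_pos (X i \<omega>)) / real m - (\<Sum>i<m. g_neg (X i \<omega>)) / real m" for m \<omega>
    by (simp add: g_split sum_subtractf diff_divide_distrib)
  moreover have "AE \<omega> in M. (\<lambda>m. (\<Sum>i<m. g_pos (X i \<omega>)) / real m - (\<Sum>i<m. g_neg (X i \<omega>)) / real m)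
      \<longlonglongrightarrow> integral\<^sup>L D g_pos - integral\<^sup>L D g_neg"
    using pos neg by eventually_elim (rule tendsto_diff)
  ultimately show ?thesis
    by (simp only:)
qed

theorem (in prob_space) strong_law_iid_euclidean:
  fixes X :: "nat \<Rightarrow> 'a \<Rightarrow> 'b" and f :: "'b \<Rightarrow> 'c::euclidean_space"
  assumes indep: "indep_vars (\<lambda>_. S) X UNIV"
    and distr_X: "\<And>i. distr M S (X i) = D"
    and [measurable]: "f \<in> borel_measurable S"
    and square_integrable: "integrable D (\<lambda>x. (norm (f x))\<^sup>2)"
  shows "AE \<omega> in M. (\<lambda>m. (\<Sum>i<m. f (X i \<omega>)) /\<^sub>R real m) \<longlonglongrightarrow> integral\<^sup>L D f"
proof -
  have sets_D [measurable_cong]: "sets D = sets S"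
    using distr_X[of 0] by auto
  interpret D: prob_space D
    using prob_space_distr[of "X 0" S] indep distr_X unfolding indep_vars_def2 by simp
  have "integrable D (\<lambda>x. norm (f x))"
    by (rule D.square_integrable_imp_integrable[OF _ square_integrable]) simp
  then have integrable: "integrable D f"
    by (simp add: integrable_norm_iff)
  have "AE \<omega> in M. \<forall>b\<in>Basis. (\<lambda>m. (\<Sum>i<m. f (X i \<omega>) \<bullet> b) / real m) \<longlonglongrightarrow> integral\<^sup>L D (\<lambda>x. f x \<bullet> b)"
  proof (rule AE_finite_allI[OF finite_Basis])
    fix b :: 'c assume "b \<in> Basis"
    then have "(f x \<bullet> b)\<^sup>2 \<le> (norm (f x))\<^sup>2" for x
      using power_mono[OF Basis_le_norm abs_ge_zero, of b "f x" 2] by simp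
    then show "AE \<omega> in M. (\<lambda>m. (\<Sum>i<m. f (X i \<omega>) \<bullet> b) / real m) \<longlonglongrightarrow> integral\<^sup>L D (\<lambda>x. f x \<bullet> b)"
      by (intro strong_law_iid[OF indep distr_X] Bochner_Integration.integrable_bound[OF square_integrable]) auto
  qed
  then show ?thesis
  proof eventually_elim
    case (elim \<omega>)
    then show ?case
      using integrable
      by (simp add: tendsto_componentwise_iff[of _ "integral\<^sup>L D f"] inner_sum_left divide_inverse_commute)
  qed
qed

theorem (in prob_space) LIMSEQ_weighted_average_iid:
  fixes X :: "nat \<Rightarrow> 'a \<Rightarrow> 'b::euclidean_space" and w :: "'b \<Rightarrow> real"
  assumes indep: "indep_vars (\<lambda>_. borel) X UNIV"
    and distr_X: "\<And>i. distr M borel (X i) = D"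
    and [measurable]: "w \<in> borel_measurable borel"
    and bounded: "\<And>x. \<bar>w x\<bar> \<le> B"
    and second_moment: "integrable D (\<lambda>x. (norm x)\<^sup>2)"
    and nonzero: "integral\<^sup>L D w \<noteq> 0"
  shows "AE \<omega> in M. (\<lambda>m. (\<Sum>i<m. w (X i \<omega>) *\<^sub>R X i \<omega>) /\<^sub>R (\<Sum>i<m. w (X i \<omega>)))
           \<longlonglongrightarrow> integral\<^sup>L D (\<lambda>x. w x *\<^sub>R x) /\<^sub>R integral\<^sup>L D w"
proof -
  have sets_D [measurable_cong]: "sets D = sets borel"
    using distr_X[of 0] by auto
  interpret D: prob_space D
    using prob_space_distr[of "X 0" borel] indep distr_X unfolding indep_vars_def2 by simp
  have square_bound: "(w x)\<^sup>2 \<le> B\<^sup>2" for x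
    using power_mono[OF bounded abs_ge_zero, of x 2] by simp
  then have "(norm (w x *\<^sub>R x))\<^sup>2 \<le> B\<^sup>2 * (norm x)\<^sup>2" for x
    by (simp add: power_mult_distrib mult_right_mono)
  then have "AE \<omega> in M. (\<lambda>m. (\<Sum>i<m. w (X i \<omega>) *\<^sub>R X i \<omega>) /\<^sub>R real m) \<longlonglongrightarrow> integral\<^sup>L D (\<lambda>x. w x *\<^sub>R x)"
    by (intro strong_law_iid_euclidean[OF indep distr_X]
        Bochner_Integration.integrable_bound[OF integrable_mult_right[where c="B\<^sup>2", OF second_moment]]) auto
  moreover have "AE \<omega> in M. (\<lambda>m. (\<Sum>i<m. w (X i \<omega>)) / real m) \<longlonglongrightarrow> integral\<^sup>L D w"
    using square_bound
    by (intro strong_law_iid[OF indep distr_X] D.integrable_const_bound[where B="B\<^sup>2"]) auto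
  ultimately show ?thesis
    by eventually_elim (rule LIMSEQ_scaleR_ratio[OF _ _ nonzero])
qed

lemma sets_std_gauss_vec [simp, measurable_cong]: "sets std_gauss_vec = sets borel"
  unfolding std_gauss_vec_def by simp

lemma space_std_gauss_vec [simp]: "space std_gauss_vec = UNIV"
  unfolding std_gauss_vec_def by simp

lemma std_gauss_density_nonneg: "0 \<le> std_gauss_density x"
  unfolding std_gauss_density_def by simp

lemma borel_measurable_std_gauss_density [measurable]: "std_gauss_density \<in> borel_measurable borel"
  unfolding std_gauss_density_def by measurable

lemma distr_std_gauss_vec_uminus:
  "distr (std_gauss_vec :: (real ^ 'd) measure) borel uminus = std_gauss_vec"
proof -
  have lborel_reflect: "distr lborel borel (uminus :: real ^ 'd \<Rightarrow> _) = lborel"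
    using lborel_affine[of "-1" "0 :: real ^ 'd"] by (simp add: density_1)
  have "density (distr lborel borel uminus) (\<lambda>x. ennreal (std_gauss_density x))
      = distr (density lborel (\<lambda>x. ennreal (std_gauss_density (- x :: real ^ 'd)))) borel uminus"
    by (rule density_distr) auto
  then show ?thesis
    unfolding lborel_reflect std_gauss_vec_def
    by (simp add: std_gauss_density_def cong: distr_cong)
qed

lemma integral_std_gauss_vec_uminus:
  fixes g :: "real ^ 'd \<Rightarrow> 'b::{banach, second_countable_topology}"
  assumes [measurable]: "g \<in> borel_measurable borel"
  shows "(\<integral>x. g (- x) \<partial>std_gauss_vec) = integral\<^sup>L std_gauss_vec g"
  using integral_distr[of uminus std_gauss_vec borel g] by (simp add: distr_std_gauss_vec_uminus)

lemma nn_integral_lborel_scaleR: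
  fixes f :: "'a::euclidean_space \<Rightarrow> ennreal"
  assumes [measurable]: "f \<in> borel_measurable borel" and "c \<noteq> 0"
  shows "(\<integral>\<^sup>+x. f x \<partial>lborel) = ennreal (\<bar>c\<bar> ^ DIM('a)) * (\<integral>\<^sup>+x. f (c *\<^sub>R x) \<partial>lborel)"
  by (subst lborel_affine[OF \<open>c \<noteq> 0\<close>, of 0])
    (simp add: nn_integral_density nn_integral_distr nn_integral_cmult)

lemma mult_exp_minus_half_le: "t * exp (- t / 2) \<le> 4 * exp (- t / 4)"
  for t :: real
proof -
  have "t \<le> 4 * exp (t / 4)"
    using exp_ge_add_one_self[of "t / 4"] by linarith
  then have "t * exp (- t / 2) \<le> 4 * exp (t / 4) * exp (- t / 2)"
    by (rule mult_right_mono) simp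
  also have "\<dots> = 4 * exp (- t / 4)"
    by (simp add: mult.assoc flip: exp_add)
  finally show ?thesis .
qed

lemma integrable_std_gauss_vec_norm_sq:
  assumes "prob_space (std_gauss_vec :: (real ^ 'd) measure)"
  shows "integrable std_gauss_vec (\<lambda>x :: real ^ 'd. (norm x)\<^sup>2)"
proof -
  have "(\<integral>\<^sup>+x. ennreal (std_gauss_density (x :: real ^ 'd)) \<partial>lborel) = 1"
    using prob_space.emeasure_space_1[OF assms] by (simp add: std_gauss_vec_def emeasure_density)
  then have scaled: "(\<integral>\<^sup>+x. ennreal (std_gauss_density (x /\<^sub>R sqrt 2 :: real ^ 'd)) \<partial>lborel)
      = ennreal (sqrt 2 ^ CARD('d))"
    using nn_integral_lborel_scaleR[of "\<lambda>x. ennreal (std_gauss_density (x /\<^sub>R sqrt 2 :: real ^ 'd))" "sqrt 2"]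
    by simp
  \<comment> \<open>|x|^2 exp (-|x|^2/2) is dominated by the density rescaled by sqrt 2, of total mass sqrt 2 ^ d.\<close>
  have pointwise: "std_gauss_density x * (norm x)\<^sup>2 \<le> 4 * std_gauss_density (x /\<^sub>R sqrt 2)"
    for x :: "real ^ 'd"
  proof -
    have half: "(norm (x /\<^sub>R sqrt 2))\<^sup>2 = (norm x)\<^sup>2 / 2"
      by (simp add: power_mult_distrib power_inverse)
    let ?c = "(2 * pi) powr (- real CARD('d) / 2)"
    have "std_gauss_density x * (norm x)\<^sup>2 = ?c * ((norm x)\<^sup>2 * exp (- (norm x)\<^sup>2 / 2))"
      unfolding std_gauss_density_def by simp
    also have "\<dots> \<le> ?c * (4 * exp (- (norm x)\<^sup>2 / 4))"
      using mult_exp_minus_half_le[of "(norm x)\<^sup>2"] by (intro mult_left_mono) simp_all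
    also have "\<dots> = 4 * std_gauss_density (x /\<^sub>R sqrt 2)"
      unfolding std_gauss_density_def half by simp
    finally show ?thesis .
  qed
  have "(\<integral>\<^sup>+x. ennreal ((norm x)\<^sup>2) \<partial>(std_gauss_vec :: (real ^ 'd) measure))
      = (\<integral>\<^sup>+x. ennreal (std_gauss_density (x :: real ^ 'd) * (norm x)\<^sup>2) \<partial>lborel)"
    unfolding std_gauss_vec_def
    by (subst nn_integral_density) (auto simp: ennreal_mult std_gauss_density_nonneg)
  also have "\<dots> \<le> (\<integral>\<^sup>+x. ennreal (4 * std_gauss_density (x /\<^sub>R sqrt 2 :: real ^ 'd)) \<partial>lborel)"
    using pointwise by (intro nn_integral_mono ennreal_leI)
  also have "\<dots> = 4 * ennreal (sqrt 2 ^ CARD('d))"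
    by (simp add: ennreal_mult std_gauss_density_nonneg nn_integral_cmult scaled)
  also have "\<dots> < \<infinity>"
    by (simp add: ennreal_mult_less_top)
  finally show ?thesis
    by (intro integrableI_bounded) auto
qed

lemma soft_weight_measurable [measurable]: "soft_weight x0 x1 xl \<in> borel_measurable borel"
  unfolding soft_weight_def by measurable

lemma soft_weight_nonneg: "0 \<le> soft_weight x0 x1 xl n"
  unfolding soft_weight_def by (simp add: add_pos_pos less_imp_le)

lemma soft_weight_add: "soft_weight x0 x1 x0 n + soft_weight x0 x1 x1 n = 1"
  using add_pos_pos[OF exp_gt_zero exp_gt_zero, of "n \<bullet> x0" "n \<bullet> x1"]
  unfolding soft_weight_def by (simp flip: add_divide_distrib)

lemma abs_soft_weight_le_1:
  assumes "xl \<in> {x0, x1}"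
  shows "\<bar>soft_weight x0 x1 xl n\<bar> \<le> 1"
  using assms soft_weight_add[of x0 x1 n] soft_weight_nonneg[of x0 x1 x0 n] soft_weight_nonneg[of x0 x1 x1 n]
  by auto

lemma soft_weight_uminus: "soft_weight x0 x1 x1 (- n) = soft_weight x0 x1 x0 n"
  unfolding soft_weight_def by (simp add: exp_minus field_simps add_pos_pos)

lemma soft_weight_eq_logistic: "soft_weight x0 x1 x0 n = 1 / (1 + exp (n \<bullet> (x1 - x0)))"
  unfolding soft_weight_def by (simp add: inner_diff_right exp_diff field_simps add_pos_pos)

lemma integral_soft_weight_std_gauss_vec:
  assumes "prob_space (std_gauss_vec :: (real ^ 'd) measure)" and "xl \<in> {x0, x1}"
  shows "integral\<^sup>L std_gauss_vec (soft_weight x0 x1 xl :: real ^ 'd \<Rightarrow> real) = 1 / 2"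
proof -
  interpret prob_space "std_gauss_vec :: (real ^ 'd) measure"
    by (fact assms(1))
  have "integrable std_gauss_vec (soft_weight x0 x1 xl :: real ^ 'd \<Rightarrow> real)" if "xl \<in> {x0, x1}" for xl
    by (rule integrable_const_bound[where B=1]) (simp_all add: abs_soft_weight_le_1[OF that])
  then have "expectation (soft_weight x0 x1 x0) + expectation (soft_weight x0 x1 x1) = 1"
    by (simp add: soft_weight_add prob_space[unfolded space_std_gauss_vec]
        flip: Bochner_Integration.integral_add)
  moreover have "expectation (soft_weight x0 x1 x1) = expectation (soft_weight x0 x1 x0)"
    using integral_std_gauss_vec_uminus[of "soft_weight x0 x1 x1"] by (simp add: soft_weight_uminus)
  ultimately show ?thesis
    using assms(2) by auto
qed

lemma integral_soft_weight_scaleR_std_gauss_vec: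
  "(LINT n|std_gauss_vec. soft_weight x0 x1 x1 n *\<^sub>R n)
    = - (LINT n|std_gauss_vec. soft_weight x0 x1 x0 n *\<^sub>R (n :: real ^ 'd))"
  using integral_std_gauss_vec_uminus[of "\<lambda>n. soft_weight x0 x1 x1 n *\<^sub>R n"]
  by (simp add: soft_weight_uminus)

theorem theorem3:
  fixes P :: "'w measure"
    and N :: "nat \<Rightarrow> 'w \<Rightarrow> real ^ 'd"
    and x0 x1 :: "real ^ 'd"
  assumes "prob_space P"
    and "x0 \<noteq> x1"
    and "norm x0 = norm x1"
    and "prob_space.indep_vars P (\<lambda>_. borel) N UNIV"
    and "\<And>i. distributed P lborel (N i) (\<lambda>x. ennreal (std_gauss_density x))"
  shows "AE \<omega> in P.
           (\<lambda>m. soft_est x0 x1 x0 (\<lambda>i. N i \<omega>) m)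
             \<longlonglongrightarrow> 2 *\<^sub>R (LINT n|std_gauss_vec. (1 / (1 + exp (n \<bullet> (x1 - x0)))) *\<^sub>R n)
         \<and> (\<lambda>m. soft_est x0 x1 x1 (\<lambda>i. N i \<omega>) m)
             \<longlonglongrightarrow> - 2 *\<^sub>R (LINT n|std_gauss_vec. (1 / (1 + exp (n \<bullet> (x1 - x0)))) *\<^sub>R n)"
proof -
  \<comment> \<open>The weights depend on the templates only through x1 - x0.\<close>
  interpret prob_space P
    by (fact assms(1))
  have distr_N: "distr P borel (N i) = std_gauss_vec" for i
    using distributed_distr_eq_density[OF assms(5)[of i]]
    by (simp add: std_gauss_vec_def cong: distr_cong)
  have gauss: "prob_space (std_gauss_vec :: (real ^ 'd) measure)"
    using prob_space_distr[of "N 0" borel] distr_N assms(4) unfolding indep_vars_def2 by simp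
  have limit: "AE \<omega> in P. (\<lambda>m. soft_est x0 x1 xl (\<lambda>i. N i \<omega>) m)
      \<longlonglongrightarrow> 2 *\<^sub>R (LINT n|std_gauss_vec. soft_weight x0 x1 xl n *\<^sub>R n)" if "xl \<in> {x0, x1}" for xl
    using LIMSEQ_weighted_average_iid[OF assms(4) distr_N soft_weight_measurable
        abs_soft_weight_le_1[OF that] integrable_std_gauss_vec_norm_sq[OF gauss]]
    by (simp add: soft_est_def integral_soft_weight_std_gauss_vec[OF gauss that])
  show ?thesis
    using limit[of x0] limit[of x1]
    by (simp add: soft_weight_eq_logistic integral_soft_weight_scaleR_std_gauss_vec)
qed

end
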